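(* Let $n\ge2$, $p\ge1$, $B\ge1$, $\theta\in[0,1/\sqrt3]$, and consider the quantities $\tilde\Pi_B(k)$, $\hat S^{\mathrm{CPSS}}_{n,\tau}$, $L_\theta$ and $\hat S_{\lfloor n/2\rfloor}$ described in the context. Suppose that for each $k\in L_\theta$ the distribution of $\tilde\Pi_B(k)$ (which is supported on $\{0,\frac1B,\frac2B,\dots,1\}$) is unimodal. Let $\tau\in\{\frac12+\frac1B,\frac12+\frac{3}{2B},\frac12+\frac2B,\dots,1\}$ and suppose moreover that $\tau\in\bigl(\min(\tfrac12+\theta^2,\tfrac12+\tfrac1{2B}+\tfrac34\theta^2),1\bigr]$. Define \[C(\tau,B)=\begin{cases}\dfrac{1}{2(2\tau-1-1/(2B))} & \text{if } \tau\in\bigl(\min(\tfrac12+\theta^2,\tfrac12+\tfrac1{2B}+\tfrac34\theta^2),\tfrac34\bigr],\\[2mm] \dfrac{4(1-\tau+1/(2B))}{1+1/B} & \text{if }\tau\in(\tfrac34,1].\end{cases}\] Then \[\mathbb{E}|\hat S^{\mathrm{CPSS}}_{n,\tau}\cap L_\theta|\le C(\tau,B)\,\theta\,\mathbb{E}|\hat S_{\lfloor n/2\rfloor}\cap L_\theta|.\]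
   Context: Let $Z_1,\dots,Z_n$ be i.i.d. random elements. A variable selection procedure is a family of statistics $\hat S_m=\hat S_m(Z_1,\dots,Z_m)$, $m\ge1$, taking values in the subsets of $\{1,\dots,p\}$. For $A=\{i_1<\dots<i_{|A|}\}\subseteq\{1,\dots,n\}$ write $\hat S(A):=\hat S_{|A|}(Z_{i_1},\dots,Z_{i_{|A|}})$, and let $p_{k,m}:=\mathbb{P}(k\in\hat S_m(Z_1,\dots,Z_m))$. Let $\{(A_{2j-1},A_{2j}):j=1,\dots,B\}$ be randomly chosen pairs of subsets of $\{1,\dots,n\}$ of size $\lfloor n/2\rfloor$ with $A_{2j-1}\cap A_{2j}=\emptyset$, the pairs independent of each other and of the data. Define $\hat\Pi_B(k):=\frac1{2B}\sum_{j=1}^{2B}\mathbb{1}_{\{k\in\hat S(A_j)\}}$, $\hat S^{\mathrm{CPSS}}_{n,\tau}:=\{k:\hat\Pi_B(k)\ge\tau\}$, and $\tilde\Pi_B(k):=\frac1B\sum_{j=1}^B\mathbb{1}_{\{k\in\hat S(A_{2j-1})\}}\mathbb{1}_{\{k\in\hat S(A_{2j})\}}$. Let $L_\theta=\{k:p_{k,\lfloor n/2\rfloor}\le\theta\}$. A probability mass function $f$ on $\{0,\frac1B,\dots,1\}$, written $f_i=f(i/B)$, is unimodal if there is $m\in\{0,\dots,B\}$ with $f_0\le f_1\le\dots\le f_m$ and $f_m\ge f_{m+1}\ge\dots\ge f_B$. *)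

theory Defs
  imports "HOL-Probability.Probability"
begin

text \<open>A selection procedure is a family S m of statistics; S m takes the sample
  z_1,...,z_m encoded as a function on the indices 1..m.\<close>

definition Shat :: "(nat \<Rightarrow> (nat \<Rightarrow> 'z) \<Rightarrow> nat set) \<Rightarrow> (nat \<Rightarrow> 'a \<Rightarrow> 'z) \<Rightarrow> nat set \<Rightarrow> 'a \<Rightarrow> nat set" where
  "Shat S Z A w = S (card A) (\<lambda>i. Z (sorted_list_of_set A ! (i - 1)) w)"

definition sel_prob :: "'a measure \<Rightarrow> (nat \<Rightarrow> (nat \<Rightarrow> 'z) \<Rightarrow> nat set) \<Rightarrow> (nat \<Rightarrow> 'a \<Rightarrow> 'z) \<Rightarrow> nat \<Rightarrow> nat \<Rightarrow> real" where
  "sel_prob P S Z m k = measure P {w \<in> space P. k \<in> Shat S Z {1..m} w}"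

text \<open>Ap j w = (A_{2j-1}, A_{2j}) for j = 1..B.\<close>
definition Pi_hat :: "(nat \<Rightarrow> (nat \<Rightarrow> 'z) \<Rightarrow> nat set) \<Rightarrow> (nat \<Rightarrow> 'a \<Rightarrow> 'z) \<Rightarrow> (nat \<Rightarrow> 'a \<Rightarrow> nat set \<times> nat set) \<Rightarrow> nat \<Rightarrow> nat \<Rightarrow> 'a \<Rightarrow> real" where
  "Pi_hat S Z Ap B k w =
     (\<Sum>j=1..B. of_bool (k \<in> Shat S Z (fst (Ap j w)) w) + of_bool (k \<in> Shat S Z (snd (Ap j w)) w)) / (2 * real B)"

definition Pi_tilde :: "(nat \<Rightarrow> (nat \<Rightarrow> 'z) \<Rightarrow> nat set) \<Rightarrow> (nat \<Rightarrow> 'a \<Rightarrow> 'z) \<Rightarrow> (nat \<Rightarrow> 'a \<Rightarrow> nat set \<times> nat set) \<Rightarrow> nat \<Rightarrow> nat \<Rightarrow> 'a \<Rightarrow> real" where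
  "Pi_tilde S Z Ap B k w =
     (\<Sum>j=1..B. of_bool (k \<in> Shat S Z (fst (Ap j w)) w) * of_bool (k \<in> Shat S Z (snd (Ap j w)) w)) / real B"

definition S_CPSS :: "(nat \<Rightarrow> (nat \<Rightarrow> 'z) \<Rightarrow> nat set) \<Rightarrow> (nat \<Rightarrow> 'a \<Rightarrow> 'z) \<Rightarrow> (nat \<Rightarrow> 'a \<Rightarrow> nat set \<times> nat set) \<Rightarrow> nat \<Rightarrow> nat \<Rightarrow> real \<Rightarrow> 'a \<Rightarrow> nat set" where
  "S_CPSS S Z Ap B p \<tau> w = {k \<in> {1..p}. Pi_hat S Z Ap B k w \<ge> \<tau>}"

definition L_theta :: "'a measure \<Rightarrow> (nat \<Rightarrow> (nat \<Rightarrow> 'z) \<Rightarrow> nat set) \<Rightarrow> (nat \<Rightarrow> 'a \<Rightarrow> 'z) \<Rightarrow> nat \<Rightarrow> nat \<Rightarrow> real \<Rightarrow> nat set" where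
  "L_theta P S Z n p \<theta> = {k \<in> {1..p}. sel_prob P S Z (n div 2) k \<le> \<theta>}"

text \<open>Unimodality of a pmf f on {0,1/B,...,1}, written f i = f(i/B).\<close>
definition unimodal :: "(nat \<Rightarrow> real) \<Rightarrow> nat \<Rightarrow> bool" where
  "unimodal f B \<longleftrightarrow> (\<exists>m\<le>B. (\<forall>i<m. f i \<le> f (Suc i)) \<and> (\<forall>i. m \<le> i \<and> i < B \<longrightarrow> f (Suc i) \<le> f i))"

definition C_tau :: "real \<Rightarrow> nat \<Rightarrow> real" where
  "C_tau \<tau> B = (if \<tau> \<le> 3/4 then 1 / (2 * (2 * \<tau> - 1 - 1 / (2 * real B)))
                 else 4 * (1 - \<tau> + 1 / (2 * real B)) / (1 + 1 / real B))"

end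

theory Submission
  imports Defs
begin

text \<open>Write \<open>\<tau> = 1/2 + t/(2B)\<close>. Since \<open>Pi_hat \<le> (1 + Pi_tilde)/2\<close>, selecting \<open>k\<close> forces the
  number \<open>X\<close> of pairs whose two halves both select \<open>k\<close> to be at least \<open>t\<close>. The halves of a pair
  are disjoint subsamples, and the choice of the pair is independent of the data, so each pair
  contributes \<open>p\<^sub>k\<^sup>2\<close> to \<open>E X = B p\<^sub>k\<^sup>2\<close>, where \<open>p\<^sub>k = p\<^sub>k\<^sub>,\<^sub>\<lfloor>\<^sub>n\<^sub>/\<^sub>2\<^sub>\<rfloor>\<close>. For a unimodal law on
  \<open>{0..B}\<close> whose mean is small compared with \<open>t\<close> (this is what the lower bound on \<open>\<tau>\<close> and
  \<open>\<theta> \<le> 1/\<surd>3\<close> guarantee when \<open>p\<^sub>k \<le> \<theta>\<close>), a Gauss--Camp--Meidell type inequality bounds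
  \<open>P(X \<ge> t)\<close> by a multiple of the mean; it is proved by Abel summation against test weights whose
  partial sums change sign at the mode. This gives \<open>P(k \<in> S\<^sup>C\<^sup>P\<^sup>S\<^sup>S) \<le> C(\<tau>,B) p\<^sub>k\<^sup>2 \<le> C(\<tau>,B) \<theta> p\<^sub>k\<close>,
  and summing over \<open>k \<in> L\<^sub>\<theta>\<close> gives the claim.\<close>

section \<open>A tail bound for unimodal laws\<close>

lemma sum_atMost_mult_Abel:
  fixes g f :: "nat \<Rightarrow> real"
  shows "(\<Sum>i\<le>B. g i * f i) = (\<Sum>i\<le>B. g i) * f B + (\<Sum>i<B. (\<Sum>l\<le>i. g l) * (f i - f (Suc i)))"
proof (induction B)
  case (Suc B)
  then show ?case by (simp add: algebra_simps)
qed simp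

lemma partial_sum_tail_minus_linear:
  "(\<Sum>l\<le>j. of_bool (t \<le> l) - R * real l) = max 0 (real j + 1 - real t) - R * real j * (real j + 1) / 2"
proof (induction j)
  case (Suc j)
  have "t \<le> j + 1 \<or> t = j + 2 \<or> t > j + 2" by arith
  then show ?case unfolding sum.atMost_Suc Suc.IH by (elim disjE) (auto simp: algebra_simps max_def)
qed (cases t, auto)

lemma partial_sum_line_weight:
  "(\<Sum>l\<le>j. real t - 1 + (real t + 1) * of_bool (t \<le> l) - 2 * real l)
    = (real t - 1) * (real j + 1) + (real t + 1) * max 0 (real j + 1 - real t) - real j * (real j + 1)"
proof (induction j)
  case (Suc j)
  have "t \<le> j + 1 \<or> t = j + 2 \<or> t > j + 2" by arith
  then show ?case unfolding sum.atMost_Suc Suc.IH by (elim disjE) (auto simp: algebra_simps max_def)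
qed (cases t, auto)

lemma partial_sum_capped_line_weight:
  assumes "1 \<le> t"
  shows "(\<Sum>l\<le>j. real t - 1 + (real t + 1) * of_bool (t \<le> l) - 2 * real (min l t))
    = (if j < t then (real j + 1) * (real t - 1 - real j) else 0)"
proof (induction j)
  case (Suc j)
  have "t \<le> j \<or> t = j + 1 \<or> t > j + 1" by arith
  then show ?case unfolding sum.atMost_Suc Suc.IH using assms by (elim disjE) (auto simp: algebra_simps)
qed (use assms in auto)

text \<open>The factor in \<open>P(X \<ge> t) \<le> tail_ratio B t * E X\<close> for unimodal \<open>X\<close> on \<open>{0..B}\<close> with small mean.\<close>

definition tail_ratio :: "nat \<Rightarrow> nat \<Rightarrow> real" where
  "tail_ratio B t =
     (if 2 * t \<le> B then 1 / (2 * real t - 1) else 2 * (real B - real t + 1) / (real B * (real B + 1)))"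

lemma tail_ratio_nonneg: "2 \<le> t \<Longrightarrow> t \<le> B \<Longrightarrow> 0 \<le> tail_ratio B t"
  unfolding tail_ratio_def by auto

lemma C_tau_eq_tail_ratio:
  assumes t: "2 \<le> t" "t \<le> B" and tau: "\<tau> = 1/2 + real t / (2 * real B)"
  shows "C_tau \<tau> B = real B * tail_ratio B t"
proof -
  have Bp: "real B > 0" using t by simp
  have "\<tau> \<le> 3/4 \<longleftrightarrow> 4 * real t \<le> 2 * real B"
    unfolding tau using Bp by (simp add: field_simps)
  then have case_iff: "\<tau> \<le> 3/4 \<longleftrightarrow> 2 * t \<le> B" by linarith
  show ?thesis
  proof (cases "2 * t \<le> B")
    case True
    have "2 * (2 * \<tau> - 1 - 1 / (2 * real B)) = (2 * real t - 1) / real B"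
      unfolding tau using Bp by (simp add: field_simps)
    then show ?thesis using True case_iff unfolding C_tau_def tail_ratio_def by simp
  next
    case False
    have "4 * (1 - \<tau> + 1 / (2 * real B)) / (1 + 1 / real B) = 2 * (real B - real t + 1) / (real B + 1)"
      unfolding tau using Bp by (simp add: divide_simps) (simp add: algebra_simps)
    moreover have "real B * (2 * (real B - real t + 1) / (real B * (real B + 1)))
        = 2 * (real B - real t + 1) / (real B + 1)"
      using Bp by simp
    ultimately show ?thesis using False case_iff unfolding C_tau_def tail_ratio_def by simp
  qed
qed

lemma linear_le_triangular:
  assumes "1 \<le> t"
  shows "2 * (2 * real t - 1) * (real j + 1 - real t) \<le> real j * (real j + 1)"
proof -
  define x :: real where "x = real j - 2 * real t + 1"
  have "x * (x + 1) \<ge> 0"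
  proof (cases "2 * t \<le> j + 1")
    case True
    then show ?thesis unfolding x_def by simp
  next
    case False
    then have "x + 1 \<le> 0" unfolding x_def by linarith
    then show ?thesis by (simp add: mult_nonpos_nonpos)
  qed
  moreover have "real j * (real j + 1) - 2 * (2 * real t - 1) * (real j + 1 - real t) = x * (x + 1)"
    unfolding x_def by (simp add: algebra_simps)
  ultimately show ?thesis by linarith
qed

lemma tail_fraction_le_endpoint:
  assumes "t \<le> j" "j \<le> B" "B < 2 * t"
  shows "(real j + 1 - real t) * (real B * (real B + 1)) \<le> (real B + 1 - real t) * (real j * (real j + 1))"
proof -
  define x where "x = real j + 1 - real t"
  define y where "y = real B + 1 - real t"
  have "0 \<le> x" "x \<le> y" unfolding x_def y_def using assms by auto
  have "x * y \<le> real t * (real t - 1)" if "j < B"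
  proof -
    have "x \<le> real t - 1" "y \<le> real t" unfolding x_def y_def using assms that by auto
    then have "x * y \<le> (real t - 1) * real t"
      using \<open>0 \<le> x\<close> \<open>x \<le> y\<close> by (intro mult_mono) auto
    then show ?thesis by (simp add: mult.commute)
  qed
  then have "0 \<le> (y - x) * (real t * (real t - 1) - x * y)"
    using \<open>x \<le> y\<close> by (cases "j = B") (auto simp: x_def y_def)
  moreover have "y * (real j * (real j + 1)) - x * (real B * (real B + 1))
      = (y - x) * (real t * (real t - 1) - x * y)"
    unfolding x_def y_def by (simp add: algebra_simps)
  ultimately show ?thesis unfolding x_def y_def by linarith
qed

lemma tail_indicator_partial_sum_le:
  assumes t: "2 \<le> t" "t \<le> B" and j: "j \<le> B"
  shows "max 0 (real j + 1 - real t) \<le> tail_ratio B t * real j * (real j + 1) / 2"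
proof (cases "t \<le> j")
  case False
  then show ?thesis using tail_ratio_nonneg[OF t] by simp
next
  case True
  show ?thesis
  proof (cases "2 * t \<le> B")
    case small: True
    have "real j + 1 - real t \<le> real j * (real j + 1) / (2 * (2 * real t - 1))"
      using linear_le_triangular[of t j] t by (simp add: field_simps)
    then show ?thesis using True small t by (simp add: tail_ratio_def field_simps)
  next
    case False
    have Bpos: "real B * (real B + 1) > 0" using t by simp
    then have "real j + 1 - real t \<le> (real B + 1 - real t) * (real j * (real j + 1)) / (real B * (real B + 1))"
      using tail_fraction_le_endpoint[of t j B] True j False by (simp add: field_simps)
    moreover have "tail_ratio B t * real j * (real j + 1) / 2
        = (real B + 1 - real t) * (real j * (real j + 1)) / (real B * (real B + 1))"
      using False Bpos by (simp add: tail_ratio_def field_simps)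
    ultimately show ?thesis using True by simp
  qed
qed

lemma tail_ratio_slope_large:
  assumes t: "t \<le> B" "B < 2 * t"
  shows "real B / 3 * (2 - (real t + 1) * tail_ratio B t) \<le> real t - 1"
proof -
  have Bpos: "real B * (real B + 1) > 0" using t by simp
  have slope_eq: "real B / 3 * (2 - (real t + 1) * tail_ratio B t)
      = (2 * real B * (real B + 1) - 2 * (real t + 1) * (real B - real t + 1)) / (3 * (real B + 1))"
    using Bpos t by (simp add: tail_ratio_def field_simps)
  have "0 \<le> (2 * real t - real B - 1) * (2 * real B - real t + 1)"
    using t by (intro mult_nonneg_nonneg) auto
  moreover have "3 * (real t - 1) * (real B + 1) - (2 * real B * (real B + 1) - 2 * (real t + 1) * (real B - real t + 1))
      = (2 * real t - real B - 1) * (2 * real B - real t + 1)"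
    by (simp add: algebra_simps)
  ultimately have "2 * real B * (real B + 1) - 2 * (real t + 1) * (real B - real t + 1) \<le> (real t - 1) * (3 * (real B + 1))"
    by (simp add: algebra_simps)
  then show ?thesis unfolding slope_eq by (simp add: divide_le_eq)
qed

text \<open>Under the constraints on the mean \<open>M\<close> imposed by the admissible range of \<open>\<tau>\<close>, the linear
  tail bound obtained for modes right of \<open>t - 1\<close> implies the ratio bound.\<close>

lemma tail_le_tail_ratio_of_linear_bound:
  fixes M T :: real
  assumes t: "2 \<le> t" "t \<le> B" and M0: "M \<ge> 0" and MB: "3 * M \<le> real B"
    and Mc: "2 * M < real t \<or> 3 * M < 2 * (real t - 1)"
    and line: "real t - 1 + (real t + 1) * T \<le> 2 * M"
  shows "T \<le> tail_ratio B t * M"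
proof -
  have slope: "M * (2 - (real t + 1) * tail_ratio B t) \<le> real t - 1"
  proof (cases "2 * t \<le> B")
    case True
    have pos: "2 * real t - 1 > 0" using t by simp
    have "2 - (real t + 1) * tail_ratio B t = 3 * (real t - 1) / (2 * real t - 1)"
      using True pos by (simp add: tail_ratio_def field_simps)
    moreover have "3 * M \<le> 2 * real t - 1" using Mc t by auto
    then have "M * (3 * (real t - 1)) \<le> (real t - 1) * (2 * real t - 1)"
      using mult_right_mono[of "3 * M" "2 * real t - 1" "real t - 1"] t by (simp add: algebra_simps)
    ultimately show ?thesis using pos by (simp add: pos_divide_le_eq)
  next
    case False
    then have "real B / 3 * (2 - (real t + 1) * tail_ratio B t) \<le> real t - 1"
      using tail_ratio_slope_large t by simp
    moreover have "M * (2 - (real t + 1) * tail_ratio B t) \<le> real B / 3 * (2 - (real t + 1) * tail_ratio B t)"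
      if "0 \<le> 2 - (real t + 1) * tail_ratio B t"
      using that MB by (intro mult_right_mono) auto
    moreover have "M * (2 - (real t + 1) * tail_ratio B t) \<le> 0" if "2 - (real t + 1) * tail_ratio B t \<le> 0"
      using that M0 by (simp add: mult_nonneg_nonpos)
    ultimately show ?thesis using t by (cases "0 \<le> 2 - (real t + 1) * tail_ratio B t") auto
  qed
  have "(real t + 1) * T \<le> 2 * M - (real t - 1)" using line by linarith
  also have "\<dots> \<le> (real t + 1) * (tail_ratio B t * M)" using slope by (simp add: algebra_simps)
  finally show ?thesis using t by simp
qed

text \<open>The coefficients \<open>R (m - 1) / 2\<close> and \<open>t - m\<close> make the partial sums below \<open>t\<close> equal to
  \<open>R (i + 1) (t - 1) (m - 1 - i) / 2\<close>, which changes sign exactly at the mode \<open>m\<close>.\<close>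

lemma mixed_weight_partial_sums:
  fixes m t B :: nat
  assumes m: "1 \<le> m" "m < t - 1" and t: "2 \<le> t" "t \<le> B"
  defines "g \<equiv> \<lambda>l. tail_ratio B t * (real m - 1) / 2 * (real t - 1 + (real t + 1) * of_bool (t \<le> l) - 2 * real l)
    + (real t - real m) * (of_bool (t \<le> l) - tail_ratio B t * real l)"
  shows "i < m \<Longrightarrow> 0 \<le> (\<Sum>l\<le>i. g l)" and "m \<le> i \<Longrightarrow> i \<le> B \<Longrightarrow> (\<Sum>l\<le>i. g l) \<le> 0"
proof -
  define R where "R = tail_ratio B t"
  have "0 \<le> R" unfolding R_def using tail_ratio_nonneg[OF t] .
  have partial: "(\<Sum>l\<le>i. g l)
      = R * (real m - 1) / 2 * ((real t - 1) * (real i + 1) + (real t + 1) * max 0 (real i + 1 - real t) - real i * (real i + 1))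
        + (real t - real m) * (max 0 (real i + 1 - real t) - R * real i * (real i + 1) / 2)" for i
    unfolding g_def R_def sum.distrib sum_distrib_left[symmetric]
    by (simp only: partial_sum_line_weight partial_sum_tail_minus_linear)
  have before_t: "(\<Sum>l\<le>i. g l) = R * (real i + 1) * (real t - 1) * (real m - 1 - real i) / 2"
    if "i < t" for i
    using that unfolding partial by (simp add: field_simps)
  show "0 \<le> (\<Sum>l\<le>i. g l)" if "i < m"
  proof -
    have "0 \<le> R * (real i + 1) * (real t - 1) * (real m - 1 - real i)"
      using \<open>0 \<le> R\<close> t that by simp
    moreover have "i < t" using that m by linarith
    ultimately show ?thesis using before_t by force
  qed
  show "(\<Sum>l\<le>i. g l) \<le> 0" if i: "m \<le> i" "i \<le> B"
  proof (cases "i < t")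
    case True
    have "R * (real i + 1) * (real t - 1) * (real m - 1 - real i) \<le> 0"
      using \<open>0 \<le> R\<close> i t by (intro mult_nonneg_nonpos) auto
    then show ?thesis unfolding before_t[OF True] by simp
  next
    case False
    have "(real t - 1) * (real i + 1) + (real t + 1) * max 0 (real i + 1 - real t) - real i * (real i + 1)
        = (real i + 1 - real t) * (real t - real i)"
      using False by (simp add: algebra_simps)
    also have "\<dots> \<le> 0" using False by (intro mult_nonneg_nonpos) auto
    finally have "R * (real m - 1) / 2 * ((real t - 1) * (real i + 1) + (real t + 1) * max 0 (real i + 1 - real t) - real i * (real i + 1)) \<le> 0"
      using \<open>0 \<le> R\<close> m by (intro mult_nonneg_nonpos) auto
    moreover have "(real t - real m) * (max 0 (real i + 1 - real t) - R * real i * (real i + 1) / 2) \<le> 0"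
      using tail_indicator_partial_sum_le[OF t i(2)] m unfolding R_def by (intro mult_nonneg_nonpos) auto
    ultimately show ?thesis unfolding partial by linarith
  qed
qed

context
  fixes f :: "nat \<Rightarrow> real" and B m :: nat
  assumes mode_le: "m \<le> B"
    and increasing_before_mode: "\<forall>i<m. f i \<le> f (Suc i)"
    and decreasing_after_mode: "\<forall>i. m \<le> i \<and> i < B \<longrightarrow> f (Suc i) \<le> f i"
    and nonneg: "\<And>i. i \<le> B \<Longrightarrow> 0 \<le> f i"
begin

lemma sum_mult_nonpos_if_partial_sums_change_sign:
  assumes before: "\<And>i. i < m \<Longrightarrow> 0 \<le> (\<Sum>l\<le>i. g l)"
    and after: "\<And>i. m \<le> i \<Longrightarrow> i \<le> B \<Longrightarrow> (\<Sum>l\<le>i. g l) \<le> 0"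
  shows "(\<Sum>i\<le>B. g i * f i) \<le> 0"
proof -
  have "(\<Sum>i\<le>B. g i) * f B \<le> 0"
    using after[of B] mode_le nonneg[of B] by (simp add: mult_nonpos_nonneg)
  moreover have "(\<Sum>l\<le>i. g l) * (f i - f (Suc i)) \<le> 0" if "i < B" for i
  proof (cases "i < m")
    case True
    then show ?thesis using before[of i] increasing_before_mode by (simp add: mult_nonneg_nonpos)
  next
    case False
    then show ?thesis using after[of i] decreasing_after_mode that by (simp add: mult_nonpos_nonneg)
  qed
  then have "(\<Sum>i<B. (\<Sum>l\<le>i. g l) * (f i - f (Suc i))) \<le> 0"
    by (intro sum_nonpos) auto
  ultimately show ?thesis unfolding sum_atMost_mult_Abel[of g f B] by linarith
qed

lemma tail_le_tail_ratio_if_mode_zero: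
  assumes "m = 0" and t: "2 \<le> t" "t \<le> B"
  shows "(\<Sum>i\<le>B. of_bool (t \<le> i) * f i) \<le> tail_ratio B t * (\<Sum>i\<le>B. real i * f i)"
proof -
  let ?g = "\<lambda>l. of_bool (t \<le> l) - tail_ratio B t * real l"
  have "(\<Sum>i\<le>B. ?g i * f i) \<le> 0"
  proof (rule sum_mult_nonpos_if_partial_sums_change_sign)
    fix i assume "i \<le> B"
    then show "(\<Sum>l\<le>i. ?g l) \<le> 0"
      unfolding partial_sum_tail_minus_linear using tail_indicator_partial_sum_le[OF t] by simp
  qed (use \<open>m = 0\<close> in simp)
  then show ?thesis by (simp add: algebra_simps sum_subtractf sum_distrib_left)
qed

lemma linear_tail_bound_if_mode_ge:
  assumes "t - 1 \<le> m" "1 \<le> t" and total: "(\<Sum>i\<le>B. f i) = 1"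
  shows "real t - 1 + (real t + 1) * (\<Sum>i\<le>B. of_bool (t \<le> i) * f i) \<le> 2 * (\<Sum>i\<le>B. real i * f i)"
proof -
  define g where "g l = real t - 1 + (real t + 1) * of_bool (t \<le> l) - 2 * real (min l t)" for l
  have partial: "(\<Sum>l\<le>i. g l) = (if i < t then (real i + 1) * (real t - 1 - real i) else 0)" for i
    unfolding g_def by (rule partial_sum_capped_line_weight[OF \<open>1 \<le> t\<close>])
  have "(\<Sum>i\<le>B. g i * f i) \<le> 0"
  proof (rule sum_mult_nonpos_if_partial_sums_change_sign)
    fix i assume "m \<le> i"
    then have "i < t \<Longrightarrow> real i = real t - 1" using assms by linarith
    then show "(\<Sum>l\<le>i. g l) \<le> 0" unfolding partial by auto
  qed (auto simp: partial)
  moreover have "(\<Sum>i\<le>B. real (min i t) * f i) \<le> (\<Sum>i\<le>B. real i * f i)"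
    using nonneg by (intro sum_mono mult_right_mono) auto
  moreover have "(\<Sum>i\<le>B. g i * f i) = (real t - 1) * (\<Sum>i\<le>B. f i)
      + (real t + 1) * (\<Sum>i\<le>B. of_bool (t \<le> i) * f i) - 2 * (\<Sum>i\<le>B. real (min i t) * f i)"
    unfolding g_def
    by (simp add: algebra_simps sum_subtractf sum.distrib sum_distrib_left del: sum_of_bool_mult_eq sum_mult_of_bool_eq)
  ultimately show ?thesis using total by simp
qed

lemma tail_bound_if_mode_between:
  assumes "1 \<le> m" "m < t - 1" and t: "2 \<le> t" "t \<le> B" and total: "(\<Sum>i\<le>B. f i) = 1"
  defines "T \<equiv> \<Sum>i\<le>B. of_bool (t \<le> i) * f i" and "M \<equiv> \<Sum>i\<le>B. real i * f i"
  shows "T \<le> tail_ratio B t * M \<or> real t - 1 + (real t + 1) * T \<le> 2 * M"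
proof -
  define R where "R = tail_ratio B t"
  define \<alpha> where "\<alpha> = R * (real m - 1) / 2"
  define \<beta> where "\<beta> = real t - real m"
  have "0 \<le> \<alpha>" "0 < \<beta>" unfolding \<alpha>_def \<beta>_def R_def using tail_ratio_nonneg[OF t] assms by auto
  define gl where "gl l = real t - 1 + (real t + 1) * of_bool (t \<le> l) - 2 * real l" for l
  define gr where "gr l = of_bool (t \<le> l) - R * real l" for l
  have "(\<Sum>i\<le>B. (\<alpha> * gl i + \<beta> * gr i) * f i) \<le> 0"
    using mixed_weight_partial_sums[OF assms(1-4)] unfolding \<alpha>_def \<beta>_def gl_def gr_def R_def
    by (intro sum_mult_nonpos_if_partial_sums_change_sign) auto
  moreover have "(\<Sum>i\<le>B. gl i * f i) = (real t - 1) * (\<Sum>i\<le>B. f i) + (real t + 1) * T - 2 * M"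
    unfolding gl_def T_def M_def
    by (simp add: algebra_simps sum_subtractf sum.distrib sum_distrib_left del: sum_of_bool_mult_eq sum_mult_of_bool_eq)
  moreover have "(\<Sum>i\<le>B. gr i * f i) = T - R * M"
    unfolding gr_def T_def M_def
    by (simp add: algebra_simps sum_subtractf sum_distrib_left del: sum_of_bool_mult_eq sum_mult_of_bool_eq)
  moreover have "(\<Sum>i\<le>B. (\<alpha> * gl i + \<beta> * gr i) * f i) = \<alpha> * (\<Sum>i\<le>B. gl i * f i) + \<beta> * (\<Sum>i\<le>B. gr i * f i)"
    by (simp add: algebra_simps sum.distrib sum_distrib_left)
  ultimately have "\<alpha> * (real t - 1 + (real t + 1) * T - 2 * M) + \<beta> * (T - R * M) \<le> 0"
    using total by simp
  then show ?thesis
    using \<open>0 \<le> \<alpha>\<close> \<open>0 < \<beta>\<close> unfolding R_def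
    by (smt (verit) mult_nonneg_nonneg mult_pos_pos)
qed

end

lemma unimodal_tail_bound:
  fixes f :: "nat \<Rightarrow> real"
  assumes t: "2 \<le> t" "t \<le> B"
    and nonneg: "\<And>i. i \<le> B \<Longrightarrow> 0 \<le> f i"
    and "unimodal f B"
    and total: "(\<Sum>i\<le>B. f i) = 1"
    and mean_le: "3 * (\<Sum>i\<le>B. real i * f i) \<le> real B"
    and mean_small: "2 * (\<Sum>i\<le>B. real i * f i) < real t \<or> 3 * (\<Sum>i\<le>B. real i * f i) < 2 * (real t - 1)"
  shows "(\<Sum>i\<le>B. of_bool (t \<le> i) * f i) \<le> tail_ratio B t * (\<Sum>i\<le>B. real i * f i)"
proof -
  obtain m where mode: "m \<le> B" "\<forall>i<m. f i \<le> f (Suc i)" "\<forall>i. m \<le> i \<and> i < B \<longrightarrow> f (Suc i) \<le> f i"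
    using \<open>unimodal f B\<close> unfolding unimodal_def by blast
  have "0 \<le> (\<Sum>i\<le>B. real i * f i)" using nonneg by (intro sum_nonneg) auto
  note from_linear = tail_le_tail_ratio_of_linear_bound[OF t this mean_le mean_small]
  consider "m = 0" | "t - 1 \<le> m" | "1 \<le> m" "m < t - 1" by linarith
  then show ?thesis
  proof cases
    case 1
    show ?thesis by (rule tail_le_tail_ratio_if_mode_zero[OF mode nonneg 1 t])
  next
    case 2
    show ?thesis using linear_tail_bound_if_mode_ge[OF mode nonneg 2 _ total] t from_linear by simp
  next
    case 3
    show ?thesis using tail_bound_if_mode_between[OF mode nonneg 3 t total] from_linear by blast
  qed
qed

lemma mean_constraints_from_threshold:
  fixes \<theta> \<tau> M :: real
  assumes t: "2 \<le> t" and tau: "\<tau> = 1/2 + real t / (2 * real B)"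
    and theta: "0 \<le> \<theta>" "\<theta> \<le> 1 / sqrt 3" and M: "M \<le> real B * \<theta>\<^sup>2"
    and tau_low: "min (1/2 + \<theta>\<^sup>2) (1/2 + 1 / (2 * real B) + 3/4 * \<theta>\<^sup>2) < \<tau>"
  shows "3 * M \<le> real B" "2 * M < real t \<or> 3 * M < 2 * (real t - 1)"
proof -
  have "\<theta>\<^sup>2 \<le> (1 / sqrt 3)\<^sup>2" using power_mono[OF theta(2) theta(1)] .
  then have "3 * \<theta>\<^sup>2 \<le> 1" by (simp add: power_divide)
  then show "3 * M \<le> real B"
    using M mult_left_mono[of "3 * \<theta>\<^sup>2" 1 "real B"] by (simp add: algebra_simps)
  consider "\<theta>\<^sup>2 < real t / (2 * real B)" | "1 / (2 * real B) + 3/4 * \<theta>\<^sup>2 < real t / (2 * real B)"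
    using tau_low unfolding tau by (auto simp: min_def split: if_splits)
  then show "2 * M < real t \<or> 3 * M < 2 * (real t - 1)"
  proof cases
    case 1
    then have "2 * (real B * \<theta>\<^sup>2) < real t" by (cases "B = 0") (simp_all add: field_simps)
    then show ?thesis using M by simp
  next
    case 2
    have "B \<noteq> 0" using 2 zero_le_power2[of \<theta>] by (cases "B = 0") auto
    with 2 have "real B * (2 + 3 * (real B * \<theta>\<^sup>2)) < real B * (2 * real t)"
      by (simp add: field_simps)
    with \<open>B \<noteq> 0\<close> have "2 + 3 * (real B * \<theta>\<^sup>2) < 2 * real t" by simp
    then show ?thesis using M by simp
  qed
qed

section \<open>Independence and expectations of counts\<close>

lemma (in prob_space) indep_vars_reindex:
  assumes indep: "indep_vars M' X I" and "inj_on \<sigma> J" "\<sigma> ` J \<subseteq> I"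
  shows "indep_vars (\<lambda>j. M' (\<sigma> j)) (\<lambda>j. X (\<sigma> j)) J"
proof -
  have "disjoint_family_on (\<lambda>j. {\<sigma> j}) J"
    using \<open>inj_on \<sigma> J\<close> by (auto simp: disjoint_family_on_def inj_on_def)
  then have "indep_vars (\<lambda>j. PiM {\<sigma> j} M') (\<lambda>j \<omega>. restrict (\<lambda>i. X i \<omega>) {\<sigma> j}) J"
    using assms by (intro indep_vars_restrict[OF indep]) auto
  then have "indep_vars (\<lambda>j. M' (\<sigma> j)) (\<lambda>j \<omega>. restrict (\<lambda>i. X i \<omega>) {\<sigma> j} (\<sigma> j)) J"
    by (rule indep_vars_compose2) (simp add: measurable_component_singleton)
  then show ?thesis by simp
qed

lemma (in prob_space) integral_sum_indicator:
  assumes "finite I" "\<And>i. i \<in> I \<Longrightarrow> A i \<in> events"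
  shows "(\<integral>w. (\<Sum>i\<in>I. c i * indicator (A i) w) \<partial>M) = (\<Sum>i\<in>I. c i * prob (A i))"
proof -
  have "integrable M (\<lambda>w. c i * indicator (A i) w :: real)" if "i \<in> I" for i
    using assms(2)[OF that] by (intro integrable_mult_right integrable_real_indicator) (auto simp: less_top[symmetric])
  then show ?thesis using assms(2) by (simp add: Int_absorb2 sets.sets_into_space)
qed

lemma (in prob_space) expectation_card_events:
  assumes "finite I" "\<And>i. i \<in> I \<Longrightarrow> A i \<in> events"
  shows "(\<integral>w. real (card {i \<in> I. w \<in> A i}) \<partial>M) = (\<Sum>i\<in>I. prob (A i))"
proof -
  have "(\<integral>w. real (card {i \<in> I. w \<in> A i}) \<partial>M) = (\<integral>w. (\<Sum>i\<in>I. 1 * indicator (A i) w) \<partial>M)"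
    using \<open>finite I\<close> by (intro Bochner_Integration.integral_cong) (auto simp: indicator_def Int_def conj_commute)
  then show ?thesis using integral_sum_indicator[OF assms, where c = "\<lambda>_. 1"] by simp
qed

context prob_space
begin

context
  fixes X :: "'a \<Rightarrow> nat" and B :: nat
  assumes bounded: "\<And>w. w \<in> space M \<Longrightarrow> X w \<le> B"
    and level_events: "\<And>i. {w \<in> space M. X w = i} \<in> events"
begin

lemma in_eq_Union_level_sets: "{w \<in> space M. X w \<in> T} = (\<Union>i\<in>{..B} \<inter> T. {w \<in> space M. X w = i})"
  using bounded by auto

lemma in_event: "{w \<in> space M. X w \<in> T} \<in> events"
  unfolding in_eq_Union_level_sets using level_events by auto

lemma prob_in_eq_sum_level_sets:
  "prob {w \<in> space M. X w \<in> T} = (\<Sum>i\<le>B. of_bool (i \<in> T) * prob {w \<in> space M. X w = i})"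
proof -
  have "prob {w \<in> space M. X w \<in> T} = (\<Sum>i\<in>{..B} \<inter> T. prob {w \<in> space M. X w = i})"
    unfolding in_eq_Union_level_sets using level_events
    by (auto intro!: finite_measure_finite_Union simp: disjoint_family_on_def)
  then show ?thesis by (simp add: Int_def)
qed

lemma sum_prob_level_sets: "(\<Sum>i\<le>B. prob {w \<in> space M. X w = i}) = 1"
  using prob_in_eq_sum_level_sets[of UNIV] by (simp add: prob_space)

lemma expectation_eq_sum_level_sets:
  "(\<integral>w. real (X w) \<partial>M) = (\<Sum>i\<le>B. real i * prob {w \<in> space M. X w = i})"
proof -
  have "(\<integral>w. real (X w) \<partial>M) = (\<integral>w. (\<Sum>i\<le>B. real i * indicator {w \<in> space M. X w = i} w) \<partial>M)"
    using bounded by (intro Bochner_Integration.integral_cong) (auto simp: indicator_def)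
  also have "\<dots> = (\<Sum>i\<le>B. real i * prob {w \<in> space M. X w = i})"
    using level_events by (intro integral_sum_indicator) auto
  finally show ?thesis .
qed

end

end

section \<open>Complementary pairs stability selection\<close>

definition sorted_nth :: "nat set \<Rightarrow> nat \<Rightarrow> nat" where
  "sorted_nth A i = sorted_list_of_set A ! (i - 1)"

lemma sorted_nth_mem:
  assumes "finite A" "i \<in> {1..card A}"
  shows "sorted_nth A i \<in> A"
proof -
  have "i - 1 < length (sorted_list_of_set A)" using assms by auto
  then show ?thesis using assms unfolding sorted_nth_def by (metis nth_mem set_sorted_list_of_set)
qed

lemma inj_on_sorted_nth:
  assumes "finite A"
  shows "inj_on (sorted_nth A) {1..card A}"
proof (rule inj_onI)
  fix i j assume "i \<in> {1..card A}" "j \<in> {1..card A}" "sorted_nth A i = sorted_nth A j"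
  moreover have "i - 1 < length (sorted_list_of_set A)" "j - 1 < length (sorted_list_of_set A)"
    using calculation assms by auto
  ultimately have "i - 1 = j - 1"
    unfolding sorted_nth_def by (simp add: nth_eq_iff_index_eq)
  then show "i = j" using \<open>i \<in> {1..card A}\<close> \<open>j \<in> {1..card A}\<close> by auto
qed

lemma Shat_eq_sorted_nth: "Shat S Z A w = S (card A) (\<lambda>i. Z (sorted_nth A i) w)"
  unfolding Shat_def sorted_nth_def ..

locale complementary_pairs = prob_space P for P :: "'a measure" +
  fixes N :: "'z measure" and Z :: "nat \<Rightarrow> 'a \<Rightarrow> 'z"
    and S :: "nat \<Rightarrow> (nat \<Rightarrow> 'z) \<Rightarrow> nat set"
    and Ap :: "nat \<Rightarrow> 'a \<Rightarrow> nat set \<times> nat set"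
    and n B :: nat
  assumes n_ge_2: "n \<ge> 2" and B_pos: "B \<ge> 1"
    and Z_indep: "indep_vars (\<lambda>_. N) Z {1..n}"
    and Z_ident: "\<forall>i\<in>{1..n}. distr P N (Z i) = distr P N (Z 1)"
    and S_local: "\<forall>m z z'. (\<forall>i\<in>{1..m}. z i = z' i) \<longrightarrow> S m z = S m z'"
    and S_meas: "\<forall>m. S m \<in> measurable (PiM {1..m} (\<lambda>_. N)) (count_space UNIV)"
    and Ap_sets: "\<forall>j\<in>{1..B}. \<forall>w\<in>space P.
         fst (Ap j w) \<subseteq> {1..n} \<and> snd (Ap j w) \<subseteq> {1..n} \<and>
         card (fst (Ap j w)) = n div 2 \<and> card (snd (Ap j w)) = n div 2 \<and>
         fst (Ap j w) \<inter> snd (Ap j w) = {}"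
    and Ap_indep: "indep_vars (\<lambda>_. count_space UNIV) Ap {1..B}"
    and Ap_Z_indep: "indep_set
         {(\<lambda>w. \<lambda>i\<in>{1..n}. Z i w) -` X \<inter> space P | X. X \<in> sets (PiM {1..n} (\<lambda>_. N))}
         {(\<lambda>w. \<lambda>j\<in>{1..B}. Ap j w) -` Y \<inter> space P | Y. Y \<in> sets (PiM {1..B} (\<lambda>_. count_space UNIV))}"
begin

abbreviation half :: nat where "half \<equiv> n div 2"

lemma Z_measurable: "i \<in> {1..n} \<Longrightarrow> Z i \<in> measurable P N"
  using Z_indep unfolding indep_vars_def by auto

lemma Ap_measurable: "j \<in> {1..B} \<Longrightarrow> Ap j \<in> measurable P (count_space UNIV)"
  using Ap_indep unfolding indep_vars_def by auto

lemma data_measurable: "I \<subseteq> {1..n} \<Longrightarrow> (\<lambda>w. \<lambda>i\<in>I. Z i w) \<in> measurable P (PiM I (\<lambda>_. N))"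
  by (intro measurable_restrict Z_measurable) auto

lemma finite_if_card_half: "card A = half \<Longrightarrow> finite A"
  using n_ge_2 by (intro card_ge_0_finite) simp

definition selecting :: "nat set \<Rightarrow> nat set \<Rightarrow> nat \<Rightarrow> (nat \<Rightarrow> 'z) set" where
  "selecting I A k = {z \<in> space (PiM I (\<lambda>_. N)). k \<in> S half (\<lambda>i\<in>{1..half}. z (sorted_nth A i))}"

lemma selecting_sets:
  assumes "A \<subseteq> I" "card A = half"
  shows "selecting I A k \<in> sets (PiM I (\<lambda>_. N))"
proof -
  have "(\<lambda>z. \<lambda>i\<in>{1..half}. z (sorted_nth A i)) \<in> measurable (PiM I (\<lambda>_. N)) (PiM {1..half} (\<lambda>_. N))"
    using sorted_nth_mem[OF finite_if_card_half] assms
    by (intro measurable_restrict measurable_component_singleton) auto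
  then have "(\<lambda>z. S half (\<lambda>i\<in>{1..half}. z (sorted_nth A i))) \<in> measurable (PiM I (\<lambda>_. N)) (count_space UNIV)"
    using S_meas measurable_compose by blast
  from measurable_sets[OF this, of "{X. k \<in> X}"] show ?thesis
    unfolding selecting_def by (simp add: vimage_def Int_def conj_commute)
qed

lemma selected_event_eq_vimage:
  assumes "A \<subseteq> I" "I \<subseteq> {1..n}" "card A = half"
  shows "{w \<in> space P. k \<in> Shat S Z A w} = (\<lambda>w. \<lambda>i\<in>I. Z i w) -` selecting I A k \<inter> space P"
proof -
  have "Shat S Z A w = S half (\<lambda>i\<in>{1..half}. (\<lambda>i\<in>I. Z i w) (sorted_nth A i))" for w
    unfolding Shat_eq_sorted_nth \<open>card A = half\<close>
    using assms sorted_nth_mem[OF finite_if_card_half[OF assms(3)]]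
    by (intro S_local[rule_format]) auto
  then show ?thesis
    using measurable_space[OF data_measurable[OF assms(2)]] unfolding selecting_def by auto
qed

lemma selected_event: "A \<subseteq> {1..n} \<Longrightarrow> card A = half \<Longrightarrow> {w \<in> space P. k \<in> Shat S Z A w} \<in> events"
  using selected_event_eq_vimage[of A A] data_measurable selecting_sets by (simp add: measurable_sets)

lemma prob_selected_eq_PiM:
  assumes A: "A \<subseteq> {1..n}" "card A = half"
  shows "prob {w \<in> space P. k \<in> Shat S Z A w}
    = measure (PiM {1..half} (\<lambda>_. distr P N (Z 1))) {z \<in> space (PiM {1..half} (\<lambda>_. N)). k \<in> S half z}"
proof -
  have sorted_nth_A: "sorted_nth A i \<in> {1..n}" if "i \<in> {1..half}" for i
    using sorted_nth_mem[OF finite_if_card_half, of A i] that A by auto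
  have "indep_vars (\<lambda>_. N) (\<lambda>i. Z (sorted_nth A i)) {1..card A}"
    using sorted_nth_A A
    by (intro indep_vars_reindex[OF Z_indep inj_on_sorted_nth[OF finite_if_card_half]]) auto
  then have indep: "indep_vars (\<lambda>_. N) (\<lambda>i. Z (sorted_nth A i)) {1..half}"
    using A by simp
  define V where "V w = (\<lambda>i\<in>{1..half}. Z (sorted_nth A i) w)" for w
  have V: "V \<in> measurable P (PiM {1..half} (\<lambda>_. N))"
    unfolding V_def using sorted_nth_A by (intro measurable_restrict Z_measurable) auto
  have "distr P (PiM {1..half} (\<lambda>_. N)) V = PiM {1..half} (\<lambda>i. distr P N (Z (sorted_nth A i)))"
    unfolding V_def using indep_vars_iff_distr_eq_PiM'[where I="{1..half}" and M'="\<lambda>_. N" and X="\<lambda>i. Z (sorted_nth A i)"]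
      indep sorted_nth_A Z_measurable n_ge_2 by auto
  also have "\<dots> = PiM {1..half} (\<lambda>_. distr P N (Z 1))"
    using Z_ident sorted_nth_A by (intro PiM_cong) auto
  finally have distr_V: "distr P (PiM {1..half} (\<lambda>_. N)) V = PiM {1..half} (\<lambda>_. distr P N (Z 1))" .
  have "{z \<in> space (PiM {1..half} (\<lambda>_. N)). k \<in> S half z} \<in> sets (PiM {1..half} (\<lambda>_. N))"
    using measurable_sets[OF S_meas[rule_format, of half], of "{X. k \<in> X}"]
    by (simp add: vimage_def Int_def conj_commute)
  then have "measure (PiM {1..half} (\<lambda>_. distr P N (Z 1))) {z \<in> space (PiM {1..half} (\<lambda>_. N)). k \<in> S half z}
      = prob (V -` {z \<in> space (PiM {1..half} (\<lambda>_. N)). k \<in> S half z} \<inter> space P)"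
    unfolding distr_V[symmetric] by (rule measure_distr[OF V])
  also have "V -` {z \<in> space (PiM {1..half} (\<lambda>_. N)). k \<in> S half z} \<inter> space P = {w \<in> space P. k \<in> Shat S Z A w}"
  proof -
    have "Shat S Z A w = S half (V w)" for w
      unfolding Shat_eq_sorted_nth V_def \<open>card A = half\<close> by (intro S_local[rule_format]) simp
    then show ?thesis using measurable_space[OF V] by auto
  qed
  finally show ?thesis ..
qed

lemma prob_selected:
  assumes "A \<subseteq> {1..n}" "card A = half"
  shows "prob {w \<in> space P. k \<in> Shat S Z A w} = sel_prob P S Z half k"
  unfolding sel_prob_def prob_selected_eq_PiM[OF assms] using n_ge_2
  by (subst prob_selected_eq_PiM) auto

lemma prob_selected_in_disjoint_subsamples:
  assumes A1: "A1 \<subseteq> {1..n}" "card A1 = half" and A2: "A2 \<subseteq> {1..n}" "card A2 = half"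
    and "A1 \<inter> A2 = {}"
  shows "prob {w \<in> space P. k \<in> Shat S Z A1 w \<and> k \<in> Shat S Z A2 w}
       = prob {w \<in> space P. k \<in> Shat S Z A1 w} * prob {w \<in> space P. k \<in> Shat S Z A2 w}"
proof -
  have "indep_var (PiM A1 (\<lambda>_. N)) (\<lambda>w. \<lambda>i\<in>A1. Z i w) (PiM A2 (\<lambda>_. N)) (\<lambda>w. \<lambda>i\<in>A2. Z i w)"
    using indep_var_restrict[OF Z_indep \<open>A1 \<inter> A2 = {}\<close>] A1 A2 by auto
  from indep_varD[OF this selecting_sets[of A1 A1 k] selecting_sets[of A2 A2 k]]
  have "prob ((\<lambda>w. (\<lambda>i\<in>A1. Z i w, \<lambda>i\<in>A2. Z i w)) -` (selecting A1 A1 k \<times> selecting A2 A2 k) \<inter> space P)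
      = prob ((\<lambda>w. \<lambda>i\<in>A1. Z i w) -` selecting A1 A1 k \<inter> space P)
        * prob ((\<lambda>w. \<lambda>i\<in>A2. Z i w) -` selecting A2 A2 k \<inter> space P)"
    using A1 A2 by simp
  moreover have "{w \<in> space P. k \<in> Shat S Z A1 w \<and> k \<in> Shat S Z A2 w}
      = (\<lambda>w. (\<lambda>i\<in>A1. Z i w, \<lambda>i\<in>A2. Z i w)) -` (selecting A1 A1 k \<times> selecting A2 A2 k) \<inter> space P"
    using selected_event_eq_vimage[OF order_refl A1, of k] selected_event_eq_vimage[OF order_refl A2, of k]
    unfolding set_eq_iff by blast
  ultimately show ?thesis
    unfolding selected_event_eq_vimage[OF order_refl A1] selected_event_eq_vimage[OF order_refl A2] by simp
qed

definition admissible_pairs :: "(nat set \<times> nat set) set" where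
  "admissible_pairs = {(A1, A2). A1 \<subseteq> {1..n} \<and> A2 \<subseteq> {1..n} \<and> card A1 = half \<and> card A2 = half \<and> A1 \<inter> A2 = {}}"

lemma finite_admissible_pairs: "finite admissible_pairs"
  by (rule finite_subset[of _ "Pow {1..n} \<times> Pow {1..n}"]) (auto simp: admissible_pairs_def)

lemma Ap_admissible: "j \<in> {1..B} \<Longrightarrow> w \<in> space P \<Longrightarrow> Ap j w \<in> admissible_pairs"
  using Ap_sets unfolding admissible_pairs_def by (auto simp: case_prod_beta)

lemma pair_choice_event: "j \<in> {1..B} \<Longrightarrow> {w \<in> space P. Ap j w = x} \<in> events"
  using measurable_sets[OF Ap_measurable, of j "{x}"] by (simp add: vimage_def Int_def conj_commute)

lemma event_split_by_pair_choice:
  "j \<in> {1..B} \<Longrightarrow> {w \<in> space P. Q (Ap j w) w}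
     = (\<Union>x\<in>admissible_pairs. {w \<in> space P. Ap j w = x} \<inter> {w \<in> space P. Q x w})"
  using Ap_admissible by auto

lemma event_at_pair_choice:
  assumes "j \<in> {1..B}" and "\<And>x. x \<in> admissible_pairs \<Longrightarrow> {w \<in> space P. Q x w} \<in> events"
  shows "{w \<in> space P. Q (Ap j w) w} \<in> events"
  unfolding event_split_by_pair_choice[OF \<open>j \<in> {1..B}\<close>]
  using assms finite_admissible_pairs pair_choice_event by (intro sets.finite_UN) auto

lemma selected_in_both_event:
  "x \<in> admissible_pairs \<Longrightarrow> {w \<in> space P. k \<in> Shat S Z (fst x) w \<and> k \<in> Shat S Z (snd x) w} \<in> events"
  using selected_event[of "fst x" k] selected_event[of "snd x" k]
  by (auto simp: admissible_pairs_def Collect_conj_eq[symmetric] split: prod.splits)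

lemma prob_selected_in_both:
  "x \<in> admissible_pairs \<Longrightarrow> prob {w \<in> space P. k \<in> Shat S Z (fst x) w \<and> k \<in> Shat S Z (snd x) w}
     = (sel_prob P S Z half k)\<^sup>2"
  by (auto simp: admissible_pairs_def prob_selected_in_disjoint_subsamples prob_selected power2_eq_square)

text \<open>The pair drawn as \<open>(A\<^sub>2\<^sub>j\<^sub>-\<^sub>1, A\<^sub>2\<^sub>j)\<close> is independent of whether a given admissible pair of
  subsamples both select \<open>k\<close>, since the latter event depends on the data only.\<close>

lemma prob_pair_choice_and_selected_in_both:
  assumes j: "j \<in> {1..B}" and x: "x \<in> admissible_pairs"
  shows "prob ({w \<in> space P. Ap j w = x} \<inter> {w \<in> space P. k \<in> Shat S Z (fst x) w \<and> k \<in> Shat S Z (snd x) w})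
       = prob {w \<in> space P. Ap j w = x} * prob {w \<in> space P. k \<in> Shat S Z (fst x) w \<and> k \<in> Shat S Z (snd x) w}"
proof -
  define data where "data w = (\<lambda>i\<in>{1..n}. Z i w)" for w
  define pairs where "pairs w = (\<lambda>j\<in>{1..B}. Ap j w)" for w
  define X where "X = selecting {1..n} (fst x) k \<inter> selecting {1..n} (snd x) k"
  define Y where "Y = (\<lambda>y. y j) -` {x} \<inter> space (PiM {1..B} (\<lambda>_. count_space UNIV :: (nat set \<times> nat set) measure))"
  have "X \<in> sets (PiM {1..n} (\<lambda>_. N))"
    using x unfolding X_def admissible_pairs_def by (auto intro!: selecting_sets)
  moreover have "Y \<in> sets (PiM {1..B} (\<lambda>_. count_space UNIV))"
    unfolding Y_def using measurable_sets[OF measurable_component_singleton[OF j], of "{x}"] by simp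
  ultimately have "prob ((data -` X \<inter> space P) \<inter> (pairs -` Y \<inter> space P))
      = prob (data -` X \<inter> space P) * prob (pairs -` Y \<inter> space P)"
    unfolding data_def pairs_def by (intro indep_setD[OF Ap_Z_indep]) auto
  moreover have "{w \<in> space P. k \<in> Shat S Z (fst x) w \<and> k \<in> Shat S Z (snd x) w} = data -` X \<inter> space P"
    using x selected_event_eq_vimage[of "fst x" "{1..n}" k] selected_event_eq_vimage[of "snd x" "{1..n}" k]
    unfolding X_def data_def set_eq_iff admissible_pairs_def by (auto split: prod.splits)
  moreover have "pairs \<in> measurable P (PiM {1..B} (\<lambda>_. count_space UNIV))"
    unfolding pairs_def by (intro measurable_restrict Ap_measurable) auto
  then have "pairs w \<in> space (PiM {1..B} (\<lambda>_. count_space UNIV))" if "w \<in> space P" for w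
    using measurable_space[of pairs, OF _ that] by blast
  then have "{w \<in> space P. Ap j w = x} = pairs -` Y \<inter> space P"
    using j unfolding Y_def by (auto simp: pairs_def)
  ultimately show ?thesis by (simp add: mult.commute Int_commute)
qed

definition first_selects :: "nat \<Rightarrow> nat \<Rightarrow> 'a set" where
  "first_selects k j = {w \<in> space P. k \<in> Shat S Z (fst (Ap j w)) w}"

definition second_selects :: "nat \<Rightarrow> nat \<Rightarrow> 'a set" where
  "second_selects k j = {w \<in> space P. k \<in> Shat S Z (snd (Ap j w)) w}"

lemma first_selects_event: "j \<in> {1..B} \<Longrightarrow> first_selects k j \<in> events"
  unfolding first_selects_def
  by (rule event_at_pair_choice) (auto simp: admissible_pairs_def intro!: selected_event)

lemma second_selects_event: "j \<in> {1..B} \<Longrightarrow> second_selects k j \<in> events"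
  unfolding second_selects_def
  by (rule event_at_pair_choice) (auto simp: admissible_pairs_def intro!: selected_event)

lemma prob_both_select:
  assumes j: "j \<in> {1..B}"
  shows "prob (first_selects k j \<inter> second_selects k j) = (sel_prob P S Z half k)\<^sup>2"
proof -
  define chosen where "chosen x = {w \<in> space P. Ap j w = x}" for x
  define both where "both x = {w \<in> space P. k \<in> Shat S Z (fst x) w \<and> k \<in> Shat S Z (snd x) w}" for x
  have events: "chosen x \<in> events" "x \<in> admissible_pairs \<Longrightarrow> both x \<in> events" for x
    unfolding chosen_def both_def using pair_choice_event[OF j] selected_in_both_event by auto
  have "first_selects k j \<inter> second_selects k j = (\<Union>x\<in>admissible_pairs. chosen x \<inter> both x)"
    unfolding first_selects_def second_selects_def chosen_def both_def
    using event_split_by_pair_choice[OF j, of "\<lambda>x w. k \<in> Shat S Z (fst x) w \<and> k \<in> Shat S Z (snd x) w"]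
    by auto
  also have "prob \<dots> = (\<Sum>x\<in>admissible_pairs. prob (chosen x \<inter> both x))"
    using finite_admissible_pairs events
    by (intro finite_measure_finite_Union) (auto simp: disjoint_family_on_def chosen_def)
  also have "\<dots> = (\<Sum>x\<in>admissible_pairs. prob (chosen x)) * (sel_prob P S Z half k)\<^sup>2"
    unfolding sum_distrib_right chosen_def both_def
    using prob_pair_choice_and_selected_in_both[OF j] prob_selected_in_both by (intro sum.cong) auto
  also have "(\<Sum>x\<in>admissible_pairs. prob (chosen x)) = prob (\<Union>x\<in>admissible_pairs. chosen x)"
    using finite_admissible_pairs events
    by (intro finite_measure_finite_Union[symmetric]) (auto simp: disjoint_family_on_def chosen_def)
  also have "(\<Union>x\<in>admissible_pairs. chosen x) = space P"
    unfolding chosen_def using Ap_admissible[OF j] by auto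
  finally show ?thesis by (simp add: prob_space)
qed

definition pair_count :: "nat \<Rightarrow> 'a \<Rightarrow> nat" where
  "pair_count k w = card {j \<in> {1..B}. w \<in> first_selects k j \<inter> second_selects k j}"

lemma pair_count_le: "pair_count k w \<le> B"
proof -
  have "pair_count k w \<le> card {1..B}"
    unfolding pair_count_def by (rule card_mono) auto
  then show ?thesis by simp
qed

lemma Pi_tilde_eq_pair_count:
  "w \<in> space P \<Longrightarrow> Pi_tilde S Z Ap B k w = real (pair_count k w) / real B"
  unfolding Pi_tilde_def pair_count_def first_selects_def second_selects_def
  by (simp add: of_bool_conj[symmetric] Int_def conj_commute)

lemma Pi_tilde_level_set_eq:
  "{w \<in> space P. Pi_tilde S Z Ap B k w = real i / real B} = {w \<in> space P. pair_count k w = i}"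
  using Pi_tilde_eq_pair_count B_pos by (auto simp: divide_cancel_right)

lemma pair_count_level_event: "{w \<in> space P. pair_count k w = i} \<in> events"
proof -
  have "(\<lambda>w. real (pair_count k w)) \<in> borel_measurable P"
  proof (rule measurable_cong[THEN iffD1])
    show "(\<lambda>w. \<Sum>j=1..B. indicator (first_selects k j \<inter> second_selects k j) w :: real) \<in> borel_measurable P"
      using first_selects_event second_selects_event
      by (intro borel_measurable_sum borel_measurable_indicator sets.Int) auto
  qed (simp add: pair_count_def indicator_def Int_def)
  from measurable_sets[OF this, of "{real i}"] show ?thesis
    by (simp add: vimage_def Int_def conj_commute)
qed

lemma expected_pair_count: "(\<integral>w. real (pair_count k w) \<partial>P) = real B * (sel_prob P S Z half k)\<^sup>2"
proof -
  have "(\<integral>w. real (pair_count k w) \<partial>P) = (\<Sum>j\<in>{1..B}. prob (first_selects k j \<inter> second_selects k j))"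
    unfolding pair_count_def
    using first_selects_event second_selects_event by (intro expectation_card_events) auto
  then show ?thesis by (simp add: prob_both_select)
qed

lemma Pi_hat_le_Pi_tilde:
  assumes "w \<in> space P"
  shows "Pi_hat S Z Ap B k w \<le> 1/2 + Pi_tilde S Z Ap B k w / 2"
proof -
  let ?a = "\<lambda>j. of_bool (k \<in> Shat S Z (fst (Ap j w)) w) :: real"
  let ?b = "\<lambda>j. of_bool (k \<in> Shat S Z (snd (Ap j w)) w) :: real"
  have "(\<Sum>j=1..B. ?a j + ?b j) \<le> (\<Sum>j=1..B. 1 + ?a j * ?b j)"
    by (intro sum_mono) auto
  then have "(\<Sum>j=1..B. ?a j + ?b j) \<le> real B + (\<Sum>j=1..B. ?a j * ?b j)"
    by (simp add: sum.distrib)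
  then show ?thesis using B_pos unfolding Pi_hat_def Pi_tilde_def by (simp add: field_simps)
qed

lemma Pi_hat_measurable: "Pi_hat S Z Ap B k \<in> borel_measurable P"
proof (rule measurable_cong[THEN iffD1])
  show "(\<lambda>w. (\<Sum>j=1..B. indicator (first_selects k j) w + indicator (second_selects k j) w) / (2 * real B) :: real)
      \<in> borel_measurable P"
    using first_selects_event second_selects_event
    by (intro borel_measurable_divide borel_measurable_sum borel_measurable_add borel_measurable_indicator
        borel_measurable_const) auto
qed (simp add: Pi_hat_def first_selects_def second_selects_def indicator_def)

lemma prob_CPSS_selects_le:
  assumes t: "2 \<le> t" "t \<le> B" and tau: "\<tau> = 1/2 + real t / (2 * real B)"
    and theta: "0 \<le> \<theta>" "\<theta> \<le> 1 / sqrt 3" and p_le: "sel_prob P S Z half k \<le> \<theta>"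
    and tau_low: "min (1/2 + \<theta>\<^sup>2) (1/2 + 1 / (2 * real B) + 3/4 * \<theta>\<^sup>2) < \<tau>"
    and "unimodal (\<lambda>i. prob {w \<in> space P. pair_count k w = i}) B"
  shows "prob {w \<in> space P. \<tau> \<le> Pi_hat S Z Ap B k w} \<le> C_tau \<tau> B * \<theta> * sel_prob P S Z half k"
proof -
  define p where "p = sel_prob P S Z half k"
  define f where "f i = prob {w \<in> space P. pair_count k w = i}" for i
  have p: "0 \<le> p" "p \<le> \<theta>" using p_le unfolding p_def sel_prob_def by auto
  have mean: "(\<Sum>i\<le>B. real i * f i) = real B * p\<^sup>2"
    using expected_pair_count expectation_eq_sum_level_sets[OF pair_count_le pair_count_level_event]
    unfolding f_def p_def by simp
  have "real B * p\<^sup>2 \<le> real B * \<theta>\<^sup>2" using p by (intro mult_left_mono power_mono) auto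
  note mean_constraints = mean_constraints_from_threshold[OF t(1) tau theta this tau_low, folded mean]
  have "{w \<in> space P. \<tau> \<le> Pi_hat S Z Ap B k w} \<subseteq> {w \<in> space P. pair_count k w \<in> {t..}}"
  proof
    fix w assume "w \<in> {w \<in> space P. \<tau> \<le> Pi_hat S Z Ap B k w}"
    then have w: "w \<in> space P" and "real t / (2 * real B) \<le> real (pair_count k w) / (2 * real B)"
      using Pi_hat_le_Pi_tilde[of w k] Pi_tilde_eq_pair_count[of w k] unfolding tau by auto
    then show "w \<in> {w \<in> space P. pair_count k w \<in> {t..}}" using B_pos by (simp add: divide_le_cancel)
  qed
  then have "prob {w \<in> space P. \<tau> \<le> Pi_hat S Z Ap B k w} \<le> prob {w \<in> space P. pair_count k w \<in> {t..}}"
    by (rule finite_measure_mono[OF _ in_event[OF pair_count_le pair_count_level_event]])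
  also have "\<dots> = (\<Sum>i\<le>B. of_bool (t \<le> i) * f i)"
    unfolding prob_in_eq_sum_level_sets[OF pair_count_le pair_count_level_event] f_def by simp
  also have "\<dots> \<le> tail_ratio B t * (\<Sum>i\<le>B. real i * f i)"
  proof (rule unimodal_tail_bound[OF t _ \<open>unimodal _ B\<close>[folded f_def] _ mean_constraints])
    show "(\<Sum>i\<le>B. f i) = 1"
      unfolding f_def by (rule sum_prob_level_sets[OF pair_count_le pair_count_level_event])
  qed (simp add: f_def)
  also have "\<dots> = tail_ratio B t * (real B * p\<^sup>2)" unfolding mean ..
  also have "\<dots> = C_tau \<tau> B * p\<^sup>2" using C_tau_eq_tail_ratio[OF t tau] by simp
  also have "\<dots> \<le> C_tau \<tau> B * (\<theta> * p)"
    using C_tau_eq_tail_ratio[OF t tau] tail_ratio_nonneg[OF t] p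
    by (intro mult_left_mono) (auto simp: power2_eq_square mult_right_mono)
  finally show ?thesis unfolding p_def by (simp add: mult.assoc)
qed

lemma expected_card_selected_within:
  assumes "finite L"
  shows "(\<integral>w. real (card (Shat S Z {1..half} w \<inter> L)) \<partial>P) = (\<Sum>k\<in>L. sel_prob P S Z half k)"
proof -
  have "(\<integral>w. real (card (Shat S Z {1..half} w \<inter> L)) \<partial>P)
      = (\<integral>w. real (card {k \<in> L. w \<in> {w \<in> space P. k \<in> Shat S Z {1..half} w}}) \<partial>P)"
    by (intro Bochner_Integration.integral_cong arg_cong[where f="\<lambda>A. real (card A)"]) auto
  also have "\<dots> = (\<Sum>k\<in>L. sel_prob P S Z half k)"
    using assms selected_event[of "{1..half}"] prob_selected[of "{1..half}"]
    by (subst expectation_card_events) auto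
  finally show ?thesis .
qed

lemma expected_card_CPSS_within:
  assumes "L \<subseteq> {1..p}"
  shows "(\<integral>w. real (card (S_CPSS S Z Ap B p \<tau> w \<inter> L)) \<partial>P)
    = (\<Sum>k\<in>L. prob {w \<in> space P. \<tau> \<le> Pi_hat S Z Ap B k w})"
proof -
  have "(\<integral>w. real (card (S_CPSS S Z Ap B p \<tau> w \<inter> L)) \<partial>P)
      = (\<integral>w. real (card {k \<in> L. w \<in> {w \<in> space P. \<tau> \<le> Pi_hat S Z Ap B k w}}) \<partial>P)"
    using assms unfolding S_CPSS_def
    by (intro Bochner_Integration.integral_cong arg_cong[where f="\<lambda>A. real (card A)"]) auto
  also have "\<dots> = (\<Sum>k\<in>L. prob {w \<in> space P. \<tau> \<le> Pi_hat S Z Ap B k w})"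
    using assms finite_subset[OF assms] measurable_sets[OF Pi_hat_measurable, of "{\<tau>..}"]
    by (intro expectation_card_events) (auto simp: vimage_def Int_def conj_commute)
  finally show ?thesis .
qed

end

theorem theorem2:
  fixes P :: "'a measure" and N :: "'z measure"
    and Z :: "nat \<Rightarrow> 'a \<Rightarrow> 'z"
    and S :: "nat \<Rightarrow> (nat \<Rightarrow> 'z) \<Rightarrow> nat set"
    and Ap :: "nat \<Rightarrow> 'a \<Rightarrow> nat set \<times> nat set"
    and n p B :: nat and \<theta> \<tau> :: real
  assumes P: "prob_space P"
    and n: "n \<ge> 2" and p: "p \<ge> 1" and B: "B \<ge> 1"
    and theta: "0 \<le> \<theta>" "\<theta> \<le> 1 / sqrt 3"
    and Z_indep: "prob_space.indep_vars P (\<lambda>_. N) Z {1..n}"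
    and Z_ident: "\<forall>i\<in>{1..n}. distr P N (Z i) = distr P N (Z 1)"
    and S_range: "\<forall>m z. S m z \<subseteq> {1..p}"
    and S_local: "\<forall>m z z'. (\<forall>i\<in>{1..m}. z i = z' i) \<longrightarrow> S m z = S m z'"
    and S_meas: "\<forall>m. S m \<in> measurable (PiM {1..m} (\<lambda>_. N)) (count_space UNIV)"
    and Ap_sets: "\<forall>j\<in>{1..B}. \<forall>w\<in>space P.
         fst (Ap j w) \<subseteq> {1..n} \<and> snd (Ap j w) \<subseteq> {1..n} \<and>
         card (fst (Ap j w)) = n div 2 \<and> card (snd (Ap j w)) = n div 2 \<and>
         fst (Ap j w) \<inter> snd (Ap j w) = {}"
    and Ap_indep: "prob_space.indep_vars P (\<lambda>_. count_space UNIV) Ap {1..B}"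
    and Ap_Z_indep: "prob_space.indep_set P
         {(\<lambda>w. \<lambda>i\<in>{1..n}. Z i w) -` X \<inter> space P | X. X \<in> sets (PiM {1..n} (\<lambda>_. N))}
         {(\<lambda>w. \<lambda>j\<in>{1..B}. Ap j w) -` Y \<inter> space P | Y. Y \<in> sets (PiM {1..B} (\<lambda>_. count_space UNIV))}"
    and unimod: "\<forall>k\<in>L_theta P S Z n p \<theta>.
         unimodal (\<lambda>i. measure P {w \<in> space P. Pi_tilde S Z Ap B k w = real i / real B}) B"
    and tau_grid: "\<exists>i::nat. 2 \<le> i \<and> i \<le> B \<and> \<tau> = 1/2 + real i / (2 * real B)"
    and tau_low: "min (1/2 + \<theta>\<^sup>2) (1/2 + 1 / (2 * real B) + 3/4 * \<theta>\<^sup>2) < \<tau>"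
    and tau_up: "\<tau> \<le> 1"
  shows "(\<integral>w. real (card (S_CPSS S Z Ap B p \<tau> w \<inter> L_theta P S Z n p \<theta>)) \<partial>P)
         \<le> C_tau \<tau> B * \<theta> *
           (\<integral>w. real (card (Shat S Z {1..n div 2} w \<inter> L_theta P S Z n p \<theta>)) \<partial>P)"
proof -
  interpret complementary_pairs P N Z S Ap n B
    using P n B Z_indep Z_ident S_local S_meas Ap_sets Ap_indep Ap_Z_indep
    by (intro complementary_pairs.intro complementary_pairs_axioms.intro)
  obtain t :: nat where t: "2 \<le> t" "t \<le> B" and tau: "\<tau> = 1/2 + real t / (2 * real B)"
    using tau_grid by blast
  define L where "L = L_theta P S Z n p \<theta>"
  have L: "L \<subseteq> {1..p}" "finite L" unfolding L_def L_theta_def by auto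
  have "prob {w \<in> space P. \<tau> \<le> Pi_hat S Z Ap B k w} \<le> C_tau \<tau> B * \<theta> * sel_prob P S Z half k"
    if "k \<in> L" for k
    using that unimod unfolding L_def L_theta_def Pi_tilde_level_set_eq
    by (intro prob_CPSS_selects_le[OF t tau theta _ tau_low]) auto
  then have "(\<Sum>k\<in>L. prob {w \<in> space P. \<tau> \<le> Pi_hat S Z Ap B k w}) \<le> C_tau \<tau> B * \<theta> * (\<Sum>k\<in>L. sel_prob P S Z half k)"
    unfolding sum_distrib_left by (rule sum_mono)
  then show ?thesis
    unfolding L_def[symmetric] expected_card_CPSS_within[OF L(1)] expected_card_selected_within[OF L(2)] .
qed

end
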